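(* Let $(X,d_X,\mu_X)$ and $(Y,d_Y,\mu_Y)$ be compact metric measure spaces, with distance kernel embeddings $\Phi_k^X$ and $\Phi_k^Y$. Let $k$ be a positive integer and let $\varepsilon=d_H^{L^2}(\Phi_k^X(X),\Phi_k^Y(Y))$. Then \[ d_{GH}(X,Y)\le 2\varepsilon\min\Big\{\max_{x\in X}\|\Phi_k^X(x)\|_2,\ \max_{y\in Y}\|\Phi_k^Y(y)\|_2\Big\}+\|E_{X,k}\|_\infty+\|E_{Y,k}\|_\infty+\varepsilon^2. \]
   Context: For a compact metric measure space $(X,d_X,\mu_X)$ (Radon Borel measure), the distance kernel operator $D^X$ on $L^2(X,\mu_X)$ is $(D^Xf)(x)=\int_X f(y)d_X(x,y)\,d\mu_X(y)$. It is compact self-adjoint; let $\phi_i$ be an orthonormal basis of real eigenfunctions with eigenvalues $\lambda_i$ ordered by decreasing absolute value (all non-zero eigenvalues assumed of multiplicity one, signs fixed by a convention). Set $\alpha_i=\sqrt{\lambda_i}\phi_i$ (square root with positive imaginary part if $\lambda_i<0$; eigenfunctions with zero eigenvalue replaced by $0$), and $\Phi_k^X(x)=(\alpha_1(x),\dots,\alpha_k(x))\in\mathbb{C}^k$. $\|\cdot\|_2$ is the Euclidean norm on $\mathbb{C}^k$ and $d_H^{L^2}$ the associated Hausdorff distance. For $v,w\in\mathbb{C}^k$ let $[v,w]=\sum_{i=1}^k v_iw_i$ (bilinear, not Hermitian). The error function is $E_{X,k}(x,x')=|[\Phi_k^X(x),\Phi_k^X(x')]-d_X(x,x')|$ on $X\times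 X$, and similarly $E_{Y,k}$. $d_{GH}$ is the Gromov–Hausdorff distance. *)

theory Defs
  imports "HOL-Analysis.Analysis"
begin

(* On a compact metric space every finite Borel measure is Radon. *)
definition cmm_space :: "'a::metric_space set \<Rightarrow> 'a measure \<Rightarrow> bool" where
  "cmm_space X M \<longleftrightarrow> compact X \<and> X \<noteq> {} \<and>
     sets M = sets (restrict_space borel X) \<and> finite_measure M"

definition L2_fun :: "'a measure \<Rightarrow> ('a \<Rightarrow> real) \<Rightarrow> bool" where
  "L2_fun M f \<longleftrightarrow> f \<in> borel_measurable M \<and> integrable M (\<lambda>x. (f x)\<^sup>2)"

definition L2_inner :: "'a measure \<Rightarrow> ('a \<Rightarrow> real) \<Rightarrow> ('a \<Rightarrow> real) \<Rightarrow> real" where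
  "L2_inner M f g = (LINT x|M. f x * g x)"

definition dk_op :: "'a::metric_space measure \<Rightarrow> ('a \<Rightarrow> real) \<Rightarrow> 'a \<Rightarrow> real" where
  "dk_op M f x = (LINT y|M. f y * dist x y)"

(* (lam i, phi i) is the spectral data of D^X as in the paper, indexed from 0:
   - the phi i are L2 functions;
   - |lam i| is non-increasing (ordering by decreasing absolute value; zero eigenvalues last);
   - for lam i \<noteq> 0, phi i is an eigenfunction (continuous representative: equation holds
     at every point of X);
   - the eigenfunctions with non-zero eigenvalue are orthonormal;
   - every non-zero eigenvalue of D^X occurs among the lam i and has multiplicity one:
     any L2 eigenfunction f with eigenvalue c \<noteq> 0 is a.e. a multiple of some phi i with lam i = c.
   Eigenfunctions with zero eigenvalue play no role (they are replaced by 0 in alpha). *)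
definition dk_eigensystem ::
  "'a::metric_space set \<Rightarrow> 'a measure \<Rightarrow> (nat \<Rightarrow> real) \<Rightarrow> (nat \<Rightarrow> 'a \<Rightarrow> real) \<Rightarrow> bool" where
  "dk_eigensystem X M lam phi \<longleftrightarrow>
     (\<forall>i. L2_fun M (phi i)) \<and>
     antimono (\<lambda>i. \<bar>lam i\<bar>) \<and>
     (\<forall>i. lam i \<noteq> 0 \<longrightarrow> (\<forall>x\<in>X. dk_op M (phi i) x = lam i * phi i x)) \<and>
     (\<forall>i j. lam i \<noteq> 0 \<longrightarrow> lam j \<noteq> 0 \<longrightarrow>
        L2_inner M (phi i) (phi j) = (if i = j then 1 else 0)) \<and>
     (\<forall>f c. L2_fun M f \<longrightarrow> c \<noteq> 0 \<longrightarrow> (AE x in M. dk_op M f x = c * f x) \<longrightarrow>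
        \<not> (AE x in M. f x = 0) \<longrightarrow>
        (\<exists>i. lam i = c \<and> (AE x in M. f x = L2_inner M f (phi i) * phi i x)))"

(* alpha_i = sqrt(lam_i) phi_i, principal square root (positive imaginary part for lam_i < 0);
   for lam_i = 0 this is 0 *)
definition dk_alpha :: "(nat \<Rightarrow> real) \<Rightarrow> (nat \<Rightarrow> 'a \<Rightarrow> real) \<Rightarrow> nat \<Rightarrow> 'a \<Rightarrow> complex" where
  "dk_alpha lam phi i x = csqrt (complex_of_real (lam i)) * complex_of_real (phi i x)"

(* Phi_k(x) in C^k, represented as a function on indices 0..k-1 (zero elsewhere) *)
definition dk_Phi :: "(nat \<Rightarrow> real) \<Rightarrow> (nat \<Rightarrow> 'a \<Rightarrow> real) \<Rightarrow> nat \<Rightarrow> 'a \<Rightarrow> (nat \<Rightarrow> complex)" where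
  "dk_Phi lam phi k x = (\<lambda>i. if i < k then dk_alpha lam phi i x else 0)"

definition vnorm2 :: "nat \<Rightarrow> (nat \<Rightarrow> complex) \<Rightarrow> real" where
  "vnorm2 k v = L2_set (\<lambda>i. cmod (v i)) {..<k}"

(* bilinear (non-Hermitian) form [v,w] on C^k *)
definition bilin :: "nat \<Rightarrow> (nat \<Rightarrow> complex) \<Rightarrow> (nat \<Rightarrow> complex) \<Rightarrow> complex" where
  "bilin k v w = (\<Sum>i<k. v i * w i)"

definition hausdist_L2 :: "nat \<Rightarrow> (nat \<Rightarrow> complex) set \<Rightarrow> (nat \<Rightarrow> complex) set \<Rightarrow> real" where
  "hausdist_L2 k A B =
     max (SUP a\<in>A. INF b\<in>B. vnorm2 k (\<lambda>i. a i - b i))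
         (SUP b\<in>B. INF a\<in>A. vnorm2 k (\<lambda>i. a i - b i))"

definition dk_err :: "(nat \<Rightarrow> real) \<Rightarrow> (nat \<Rightarrow> 'a::metric_space \<Rightarrow> real) \<Rightarrow> nat \<Rightarrow> 'a \<Rightarrow> 'a \<Rightarrow> real" where
  "dk_err lam phi k x x' =
     cmod (bilin k (dk_Phi lam phi k x) (dk_Phi lam phi k x') - complex_of_real (dist x x'))"

definition dk_err_sup :: "'a::metric_space set \<Rightarrow> (nat \<Rightarrow> real) \<Rightarrow> (nat \<Rightarrow> 'a \<Rightarrow> real) \<Rightarrow> nat \<Rightarrow> real" where
  "dk_err_sup X lam phi k = (SUP p\<in>X \<times> X. dk_err lam phi k (fst p) (snd p))"

definition correspondence :: "'a set \<Rightarrow> 'b set \<Rightarrow> ('a \<times> 'b) set \<Rightarrow> bool" where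
  "correspondence X Y R \<longleftrightarrow> R \<subseteq> X \<times> Y \<and> (\<forall>x\<in>X. \<exists>y. (x, y) \<in> R) \<and> (\<forall>y\<in>Y. \<exists>x. (x, y) \<in> R)"

definition distortion :: "('a::metric_space \<times> 'b::metric_space) set \<Rightarrow> real" where
  "distortion R = (SUP p\<in>R \<times> R. \<bar>dist (fst (fst p)) (fst (snd p)) - dist (snd (fst p)) (snd (snd p))\<bar>)"

definition GH_dist :: "'a::metric_space set \<Rightarrow> 'b::metric_space set \<Rightarrow> real" where
  "GH_dist X Y = (1/2) * (INF R\<in>{R. correspondence X Y R}. distortion R)"

end

theory Submission
  imports Defs
begin

text \<open>The distance kernel operator maps integrable functions to Lipschitz functions, so every
eigenfunction with non-zero eigenvalue is continuous and \<Phi>_k^X, \<Phi>_k^Y are continuous on the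
compact spaces X, Y. Hence the Hausdorff distance \<epsilon> is attained pointwise, and pairing x with y
whenever the L2 distance of \<Phi>_k^X(x) and \<Phi>_k^Y(y) is at most \<epsilon> is a correspondence. For two
pairs (x, y), (x', y') of it, d_X(x, x') and d_Y(y, y') differ from the bilinear forms
[\<Phi>_k^X(x), \<Phi>_k^X(x')] and [\<Phi>_k^Y(y), \<Phi>_k^Y(y')] by at most the error terms, and writing
\<Phi>_k^X = \<Phi>_k^Y + (\<Phi>_k^X - \<Phi>_k^Y) in both arguments and applying Cauchy-Schwarz bounds the
difference of the bilinear forms by 2 \<epsilon> m + \<epsilon>^2, with m the smaller of the two maximal norms.
So the distortion of this correspondence, which bounds 2 d_GH(X, Y), is at most the right-hand side.\<close>

lemma cmm_space_space_eq: "cmm_space X M \<Longrightarrow> space M = X"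
  unfolding cmm_space_def by (metis sets_eq_imp_space_eq space_restrict_space Int_absorb2 space_borel subset_UNIV)

lemma cmm_space_measurable_dist:
  assumes "cmm_space X M"
  shows "(\<lambda>y. dist x y) \<in> borel_measurable M"
proof -
  have "(\<lambda>y. dist x y) \<in> borel_measurable (restrict_space borel X)"
    by (intro measurable_restrict_space1 borel_measurable_continuous_onI continuous_intros)
  then show ?thesis using assms by (simp add: cmm_space_def cong: measurable_cong_sets)
qed

lemma cmm_space_L2_fun_integrable:
  assumes "cmm_space X M" and "L2_fun M f"
  shows "integrable M f"
proof -
  interpret finite_measure M using assms(1) by (simp add: cmm_space_def)
  show ?thesis using assms(2) by (auto simp: L2_fun_def intro: square_integrable_imp_integrable)
qed

lemma cmm_space_integrable_dk_op_kernel: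
  assumes cm: "cmm_space X M" and f: "L2_fun M f" and x: "x \<in> X"
  shows "integrable M (\<lambda>y. f y * dist x y)"
proof (rule Bochner_Integration.integrable_bound)
  show "integrable M (\<lambda>y. \<bar>f y\<bar> * diameter X)"
    using cmm_space_L2_fun_integrable[OF cm f] by (intro integrable_mult_left integrable_abs)
  show "(\<lambda>y. f y * dist x y) \<in> borel_measurable M"
    using f by (auto simp: L2_fun_def intro!: borel_measurable_times cmm_space_measurable_dist[OF cm])
  have "bounded X" using cm by (simp add: cmm_space_def compact_imp_bounded)
  then have "dist x y \<le> \<bar>diameter X\<bar>" if "y \<in> space M" for y
    using that x cmm_space_space_eq[OF cm] by (metis abs_ge_self diameter_bounded_bound order.trans)
  then show "AE y in M. norm (f y * dist x y) \<le> norm (\<bar>f y\<bar> * diameter X)"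
    by (intro AE_I2) (simp add: abs_mult mult_left_mono)
qed

lemma lipschitz_on_dk_op:
  assumes cm: "cmm_space X M" and f: "L2_fun M f"
  shows "(LINT y|M. \<bar>f y\<bar>)-lipschitz_on X (dk_op M f)"
proof (rule lipschitz_onI)
  fix x x' assume x: "x \<in> X" and x': "x' \<in> X"
  have "dk_op M f x - dk_op M f x' = (LINT y|M. f y * (dist x y - dist x' y))"
    using cmm_space_integrable_dk_op_kernel[OF cm f x] cmm_space_integrable_dk_op_kernel[OF cm f x']
    by (simp add: dk_op_def right_diff_distrib)
  also have "\<bar>\<dots>\<bar> \<le> (LINT y|M. \<bar>f y * (dist x y - dist x' y)\<bar>)"
    by (rule integral_abs_bound)
  also have "\<dots> \<le> (LINT y|M. \<bar>f y\<bar> * dist x x')"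
  proof (rule integral_mono)
    show "integrable M (\<lambda>y. \<bar>f y * (dist x y - dist x' y)\<bar>)"
      using cmm_space_integrable_dk_op_kernel[OF cm f x] cmm_space_integrable_dk_op_kernel[OF cm f x']
      by (simp add: right_diff_distrib)
    show "integrable M (\<lambda>y. \<bar>f y\<bar> * dist x x')"
      using cmm_space_L2_fun_integrable[OF cm f] by (intro integrable_mult_left integrable_abs)
    show "\<bar>f y * (dist x y - dist x' y)\<bar> \<le> \<bar>f y\<bar> * dist x x'" for y
      using abs_dist_diff_le[of x y x'] by (simp add: abs_mult dist_commute mult_left_mono)
  qed
  finally show "dist (dk_op M f x) (dk_op M f x') \<le> (LINT y|M. \<bar>f y\<bar>) * dist x x'"
    by (simp add: dist_real_def)
qed simp

lemma continuous_on_dk_eigenfunction: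
  assumes cm: "cmm_space X M" and es: "dk_eigensystem X M lam phi" and nz: "lam i \<noteq> 0"
  shows "continuous_on X (phi i)"
proof -
  have f: "L2_fun M (phi i)" and eigen: "\<And>x. x \<in> X \<Longrightarrow> dk_op M (phi i) x = lam i * phi i x"
    using es nz unfolding dk_eigensystem_def by blast+
  have "continuous_on X (\<lambda>x. dk_op M (phi i) x / lam i)"
    using lipschitz_on_continuous_on[OF lipschitz_on_dk_op[OF cm f]] nz
    by (intro continuous_on_divide continuous_on_const) auto
  moreover have "continuous_on X (\<lambda>x. dk_op M (phi i) x / lam i) = continuous_on X (phi i)"
    using nz by (intro continuous_on_cong) (simp_all add: eigen)
  ultimately show ?thesis by simp
qed

lemma continuous_on_dk_Phi:
  assumes "cmm_space X M" and "dk_eigensystem X M lam phi"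
  shows "continuous_on X (\<lambda>x. dk_Phi lam phi k x i)"
proof (cases "i < k \<and> lam i \<noteq> 0")
  case True
  then have "continuous_on X (\<lambda>x. csqrt (complex_of_real (lam i)) * complex_of_real (phi i x))"
    by (intro continuous_on_mult_left continuous_on_of_real continuous_on_dk_eigenfunction[OF assms]) simp
  then show ?thesis using True by (simp add: dk_Phi_def dk_alpha_def)
next
  case False
  then have "(\<lambda>x. dk_Phi lam phi k x i) = (\<lambda>x. 0)" by (auto simp: dk_Phi_def dk_alpha_def)
  then show ?thesis by (metis continuous_on_const)
qed

lemma vnorm2_nonneg: "0 \<le> vnorm2 k v"
  unfolding vnorm2_def by (rule L2_set_nonneg)

lemma vnorm2_diff_commute: "vnorm2 k (\<lambda>i. a i - b i) = vnorm2 k (\<lambda>i. b i - a i)"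
  unfolding vnorm2_def by (simp add: norm_minus_commute)

lemma continuous_on_vnorm2:
  assumes "\<And>i. continuous_on S (\<lambda>s. F s i)"
  shows "continuous_on S (\<lambda>s. vnorm2 k (F s))"
  unfolding vnorm2_def L2_set_def by (intro continuous_intros assms)

lemma norm_bilin_le: "cmod (bilin k u v) \<le> vnorm2 k u * vnorm2 k v"
proof -
  have "cmod (bilin k u v) \<le> (\<Sum>i<k. \<bar>cmod (u i)\<bar> * \<bar>cmod (v i)\<bar>)"
    unfolding bilin_def by (rule order.trans[OF norm_sum]) (simp add: norm_mult)
  also have "\<dots> \<le> vnorm2 k u * vnorm2 k v"
    unfolding vnorm2_def by (rule L2_set_mult_ineq)
  finally show ?thesis .
qed

lemma bilin_diff_eq:
  "bilin k a a' - bilin k b b' = bilin k (\<lambda>i. a i - b i) a' + bilin k a (\<lambda>i. a' i - b' i)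
     - bilin k (\<lambda>i. a i - b i) (\<lambda>i. a' i - b' i)"
  unfolding bilin_def by (simp add: sum_subtractf[symmetric] sum.distrib[symmetric] algebra_simps)

lemma norm_bilin_diff_le:
  assumes d: "vnorm2 k (\<lambda>i. a i - b i) \<le> e" and d': "vnorm2 k (\<lambda>i. a' i - b' i) \<le> e"
    and a: "vnorm2 k a \<le> m" and a': "vnorm2 k a' \<le> m"
  shows "cmod (bilin k a a' - bilin k b b') \<le> 2 * e * m + e\<^sup>2"
proof -
  let ?d = "\<lambda>i. a i - b i" and ?d' = "\<lambda>i. a' i - b' i"
  have e: "0 \<le> e" and m: "0 \<le> m" using d a vnorm2_nonneg order.trans by blast+
  have "cmod (bilin k a a' - bilin k b b')
      \<le> cmod (bilin k ?d a') + cmod (bilin k a ?d') + cmod (bilin k ?d ?d')"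
    unfolding bilin_diff_eq by (rule order.trans[OF norm_triangle_ineq4 add_right_mono[OF norm_triangle_ineq]])
  also have "\<dots> \<le> e * m + m * e + e * e"
    using e m vnorm2_nonneg
    by (intro add_mono order.trans[OF norm_bilin_le] mult_mono d d' a a') auto
  finally show ?thesis by (simp add: power2_eq_square)
qed

lemma norm_bilin_diff_le_min:
  assumes "vnorm2 k (\<lambda>i. a i - b i) \<le> e" and "vnorm2 k (\<lambda>i. a' i - b' i) \<le> e"
    and "vnorm2 k a \<le> m" and "vnorm2 k a' \<le> m" and "vnorm2 k b \<le> n" and "vnorm2 k b' \<le> n"
  shows "cmod (bilin k a a' - bilin k b b') \<le> 2 * e * min m n + e\<^sup>2"
proof (cases "m \<le> n")
  case True
  then show ?thesis using norm_bilin_diff_le[OF assms(1-4)] by simp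
next
  case False
  have "cmod (bilin k b b' - bilin k a a') \<le> 2 * e * n + e\<^sup>2"
    using assms by (intro norm_bilin_diff_le)
      (simp_all add: vnorm2_diff_commute[of k b a] vnorm2_diff_commute[of k b' a'])
  with False show ?thesis by (simp add: norm_minus_commute)
qed

lemma hausdist_L2_commute: "hausdist_L2 k A B = hausdist_L2 k B A"
  unfolding hausdist_L2_def by (subst (1 2) vnorm2_diff_commute) (rule max.commute)

lemma compact_cSUP_upper:
  fixes f :: "'s::topological_space \<Rightarrow> real"
  assumes "compact S" and "continuous_on S f" and "x \<in> S"
  shows "f x \<le> (SUP x\<in>S. f x)"
  using assms by (intro cSUP_upper bounded_imp_bdd_above compact_imp_bounded compact_continuous_image)

lemma hausdist_L2_attained:
  fixes F :: "'s::topological_space \<Rightarrow> nat \<Rightarrow> complex"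
    and G :: "'t::topological_space \<Rightarrow> nat \<Rightarrow> complex"
  assumes S: "compact S" and T: "compact T" "T \<noteq> {}"
    and F: "\<And>i. continuous_on S (\<lambda>s. F s i)" and G: "\<And>i. continuous_on T (\<lambda>t. G t i)"
    and s: "s \<in> S"
  shows "\<exists>t\<in>T. vnorm2 k (\<lambda>i. F s i - G t i) \<le> hausdist_L2 k (F ` S) (G ` T)"
proof -
  define g where "g s t = vnorm2 k (\<lambda>i. F s i - G t i)" for s t
  have g_bdd_below: "bdd_below (g s' ` T)" for s'
    unfolding g_def by (rule bdd_belowI2[OF vnorm2_nonneg])
  have g_cont_T: "continuous_on T (g s')" for s'
    unfolding g_def by (intro continuous_on_vnorm2 continuous_on_diff continuous_on_const G)
  have g_cont_S: "continuous_on S (\<lambda>s'. g s' t')" for t'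
    unfolding g_def by (intro continuous_on_vnorm2 continuous_on_diff continuous_on_const F)
  obtain t where t: "t \<in> T" "\<And>t'. t' \<in> T \<Longrightarrow> g s t \<le> g s t'"
    using continuous_attains_inf[OF T g_cont_T] by blast
  then have "g s t \<le> (INF t'\<in>T. g s t')"
    using T(2) by (intro cINF_greatest) auto
  also have "\<dots> \<le> (SUP s'\<in>S. INF t'\<in>T. g s' t')"
  proof (rule cSUP_upper[OF s])
    have "\<And>s'. s' \<in> S \<Longrightarrow> g s' t \<le> (SUP s''\<in>S. g s'' t)"
      by (rule compact_cSUP_upper[OF S g_cont_S])
    then show "bdd_above ((\<lambda>s'. INF t'\<in>T. g s' t') ` S)"
      by (intro bdd_aboveI2 order.trans[OF cINF_lower[OF g_bdd_below t(1)]])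
  qed
  also have "\<dots> \<le> hausdist_L2 k (F ` S) (G ` T)"
    unfolding hausdist_L2_def g_def by (simp add: image_image)
  finally show ?thesis using t(1) unfolding g_def by blast
qed

lemma correspondence_hausdist_L2:
  fixes F :: "'s::topological_space \<Rightarrow> nat \<Rightarrow> complex"
    and G :: "'t::topological_space \<Rightarrow> nat \<Rightarrow> complex"
  assumes S: "compact S" "S \<noteq> {}" and T: "compact T" "T \<noteq> {}"
    and F: "\<And>i. continuous_on S (\<lambda>s. F s i)" and G: "\<And>i. continuous_on T (\<lambda>t. G t i)"
  shows "correspondence S T
    {(s, t). s \<in> S \<and> t \<in> T \<and> vnorm2 k (\<lambda>i. F s i - G t i) \<le> hausdist_L2 k (F ` S) (G ` T)}"
proof -
  have "\<exists>t\<in>T. vnorm2 k (\<lambda>i. F s i - G t i) \<le> hausdist_L2 k (F ` S) (G ` T)" if "s \<in> S" for s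
    by (rule hausdist_L2_attained[where F = F and G = G, OF S(1) T F G that])
  moreover have "\<exists>s\<in>S. vnorm2 k (\<lambda>i. F s i - G t i) \<le> hausdist_L2 k (F ` S) (G ` T)" if "t \<in> T" for t
    using hausdist_L2_attained[where F = G and G = F and k = k, OF T(1) S G F that]
    by (simp add: hausdist_L2_commute[of k "G ` T"] vnorm2_diff_commute[of k "G t"])
  ultimately show ?thesis unfolding correspondence_def by blast
qed

lemma bdd_above_distortion:
  fixes X :: "'a::metric_space set" and Y :: "'b::metric_space set"
  assumes "R \<subseteq> X \<times> Y" and "bounded X" and "bounded Y"
  shows "bdd_above ((\<lambda>p. \<bar>dist (fst (fst p)) (fst (snd p)) - dist (snd (fst p)) (snd (snd p))\<bar>) ` (R \<times> R))"
proof (rule bdd_aboveI2)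
  fix p assume "p \<in> R \<times> R"
  then have "dist (fst (fst p)) (fst (snd p)) \<le> diameter X" "dist (snd (fst p)) (snd (snd p)) \<le> diameter Y"
    using assms by (auto intro!: diameter_bounded_bound)
  then show "\<bar>dist (fst (fst p)) (fst (snd p)) - dist (snd (fst p)) (snd (snd p))\<bar> \<le> diameter X + diameter Y"
    using zero_le_dist[of "fst (fst p)" "fst (snd p)"] zero_le_dist[of "snd (fst p)" "snd (snd p)"]
    by linarith
qed

lemma distortion_nonneg:
  fixes X :: "'a::metric_space set" and Y :: "'b::metric_space set"
  assumes "correspondence X Y R" and "R \<noteq> {}" and "bounded X" and "bounded Y"
  shows "0 \<le> distortion R"
proof -
  obtain x y where "(x, y) \<in> R" using assms(2) by auto
  then show ?thesis
    using cSUP_upper[OF _ bdd_above_distortion, of "((x, y), (x, y))" R X Y] assms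
    by (simp add: distortion_def correspondence_def)
qed

lemma GH_dist_le_half:
  fixes X :: "'a::metric_space set" and Y :: "'b::metric_space set"
  assumes X: "bounded X" and Y: "bounded Y" and R: "correspondence X Y R" "R \<noteq> {}"
    and D: "\<And>x y x' y'. (x, y) \<in> R \<Longrightarrow> (x', y') \<in> R \<Longrightarrow> \<bar>dist x x' - dist y y'\<bar> \<le> D"
  shows "GH_dist X Y \<le> D / 2"
proof -
  have "distortion R \<le> D"
    unfolding distortion_def
  proof (rule cSUP_least)
    fix p assume "p \<in> R \<times> R"
    then show "\<bar>dist (fst (fst p)) (fst (snd p)) - dist (snd (fst p)) (snd (snd p))\<bar> \<le> D"
      using D[of "fst (fst p)" "snd (fst p)" "fst (snd p)" "snd (snd p)"] by (simp add: mem_Times_iff)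
  qed (use R(2) in simp)
  have "R' \<noteq> {}" if "correspondence X Y R'" for R'
    using R that unfolding correspondence_def by fast
  then have "bdd_below (distortion ` {R. correspondence X Y R})"
    using distortion_nonneg[OF _ _ X Y] by (intro bdd_belowI2) auto
  then have "(INF R\<in>{R. correspondence X Y R}. distortion R) \<le> distortion R"
    using R(1) by (intro cINF_lower) auto
  with \<open>distortion R \<le> D\<close> show ?thesis unfolding GH_dist_def by linarith
qed

lemma abs_dist_diff_le_dk_err:
  "\<bar>dist x x' - dist y y'\<bar> \<le> dk_err lamX phiX k x x'
     + cmod (bilin k (dk_Phi lamX phiX k x) (dk_Phi lamX phiX k x')
         - bilin k (dk_Phi lamY phiY k y) (dk_Phi lamY phiY k y'))
     + dk_err lamY phiY k y y'"
proof -
  let ?a = "bilin k (dk_Phi lamX phiX k x) (dk_Phi lamX phiX k x')"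
  let ?b = "bilin k (dk_Phi lamY phiY k y) (dk_Phi lamY phiY k y')"
  have "\<bar>dist x x' - dist y y'\<bar> = cmod (complex_of_real (dist x x' - dist y y'))"
    by (simp only: norm_of_real)
  also have "\<dots> = cmod ((complex_of_real (dist x x') - ?a) + (?a - ?b) + (?b - complex_of_real (dist y y')))"
    by simp
  also have "\<dots> \<le> cmod (complex_of_real (dist x x') - ?a) + cmod (?a - ?b) + cmod (?b - complex_of_real (dist y y'))"
    by (intro norm_triangle_le add_right_mono norm_triangle_ineq)
  finally show ?thesis by (simp add: dk_err_def norm_minus_commute)
qed

lemma dk_err_le_dk_err_sup:
  assumes cm: "cmm_space X M" and es: "dk_eigensystem X M lam phi" and "x \<in> X" "x' \<in> X"
  shows "dk_err lam phi k x x' \<le> dk_err_sup X lam phi k"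
proof -
  have Phi_fst: "continuous_on (X \<times> X) (\<lambda>p. dk_Phi lam phi k (fst p) i)" for i
    by (rule continuous_on_compose2[OF continuous_on_dk_Phi[OF cm es] continuous_on_fst[OF continuous_on_id]]) auto
  have Phi_snd: "continuous_on (X \<times> X) (\<lambda>p. dk_Phi lam phi k (snd p) i)" for i
    by (rule continuous_on_compose2[OF continuous_on_dk_Phi[OF cm es] continuous_on_snd[OF continuous_on_id]]) auto
  have "continuous_on (X \<times> X) (\<lambda>p. dk_err lam phi k (fst p) (snd p))"
    unfolding dk_err_def bilin_def by (intro continuous_intros Phi_fst Phi_snd)
  moreover have "compact (X \<times> X)" using cm by (simp add: cmm_space_def compact_Times)
  ultimately show ?thesis
    unfolding dk_err_sup_def
    using compact_cSUP_upper[of "X \<times> X" "\<lambda>p. dk_err lam phi k (fst p) (snd p)" "(x, x')"] assms(3,4)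
    by simp
qed

lemma vnorm2_dk_Phi_le_SUP:
  assumes "cmm_space X M" and "dk_eigensystem X M lam phi" and "x \<in> X"
  shows "vnorm2 k (dk_Phi lam phi k x) \<le> (SUP x\<in>X. vnorm2 k (dk_Phi lam phi k x))"
  using assms by (intro compact_cSUP_upper continuous_on_vnorm2 continuous_on_dk_Phi) (auto simp: cmm_space_def)

lemma abs_dist_diff_le_dk_Phi:
  assumes X: "cmm_space X M" "dk_eigensystem X M lamX phiX"
    and Y: "cmm_space Y N" "dk_eigensystem Y N lamY phiY"
    and x: "x \<in> X" "x' \<in> X" and y: "y \<in> Y" "y' \<in> Y"
    and close: "vnorm2 k (\<lambda>i. dk_Phi lamX phiX k x i - dk_Phi lamY phiY k y i) \<le> e"
      "vnorm2 k (\<lambda>i. dk_Phi lamX phiX k x' i - dk_Phi lamY phiY k y' i) \<le> e"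
  shows "\<bar>dist x x' - dist y y'\<bar> \<le>
    2 * e * min (SUP x\<in>X. vnorm2 k (dk_Phi lamX phiX k x)) (SUP y\<in>Y. vnorm2 k (dk_Phi lamY phiY k y))
    + dk_err_sup X lamX phiX k + dk_err_sup Y lamY phiY k + e\<^sup>2"
proof -
  have "cmod (bilin k (dk_Phi lamX phiX k x) (dk_Phi lamX phiX k x')
        - bilin k (dk_Phi lamY phiY k y) (dk_Phi lamY phiY k y'))
      \<le> 2 * e * min (SUP x\<in>X. vnorm2 k (dk_Phi lamX phiX k x)) (SUP y\<in>Y. vnorm2 k (dk_Phi lamY phiY k y)) + e\<^sup>2"
    using close x y by (intro norm_bilin_diff_le_min vnorm2_dk_Phi_le_SUP[OF X] vnorm2_dk_Phi_le_SUP[OF Y])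
  then show ?thesis
    using abs_dist_diff_le_dk_err[of x x' y y' lamX phiX k lamY phiY]
      dk_err_le_dk_err_sup[OF X x, of k] dk_err_le_dk_err_sup[OF Y y, of k]
    by linarith
qed

theorem theorem6p8:
  fixes X :: "'a::metric_space set" and M :: "'a measure"
    and lamX :: "nat \<Rightarrow> real" and phiX :: "nat \<Rightarrow> 'a \<Rightarrow> real"
    and Y :: "'b::metric_space set" and N :: "'b measure"
    and lamY :: "nat \<Rightarrow> real" and phiY :: "nat \<Rightarrow> 'b \<Rightarrow> real"
    and k :: nat and \<epsilon> :: real
  assumes "cmm_space X M" and "cmm_space Y N"
    and "dk_eigensystem X M lamX phiX" and "dk_eigensystem Y N lamY phiY"
    and "k > 0"
    and "\<epsilon> = hausdist_L2 k (dk_Phi lamX phiX k ` X) (dk_Phi lamY phiY k ` Y)"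
  shows "GH_dist X Y \<le>
    2 * \<epsilon> * min (SUP x\<in>X. vnorm2 k (dk_Phi lamX phiX k x)) (SUP y\<in>Y. vnorm2 k (dk_Phi lamY phiY k y))
    + dk_err_sup X lamX phiX k + dk_err_sup Y lamY phiY k + \<epsilon>\<^sup>2"
proof -
  let ?\<Phi> = "dk_Phi lamX phiX k" and ?\<Psi> = "dk_Phi lamY phiY k"
  define R where "R = {(x, y). x \<in> X \<and> y \<in> Y \<and> vnorm2 k (\<lambda>i. ?\<Phi> x i - ?\<Psi> y i) \<le> \<epsilon>}"
  define D where "D = 2 * \<epsilon> * min (SUP x\<in>X. vnorm2 k (?\<Phi> x)) (SUP y\<in>Y. vnorm2 k (?\<Psi> y))
    + dk_err_sup X lamX phiX k + dk_err_sup Y lamY phiY k + \<epsilon>\<^sup>2"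
  have X: "compact X" "X \<noteq> {}" and Y: "compact Y" "Y \<noteq> {}"
    using assms(1,2) by (auto simp: cmm_space_def)
  have R: "correspondence X Y R"
    unfolding R_def assms(6)
    by (intro correspondence_hausdist_L2 X Y continuous_on_dk_Phi[OF assms(1,3)] continuous_on_dk_Phi[OF assms(2,4)])
  then have "R \<noteq> {}"
    using X(2) by (auto simp: correspondence_def)
  have R_dist: "\<bar>dist x x' - dist y y'\<bar> \<le> D" if "(x, y) \<in> R" "(x', y') \<in> R" for x y x' y'
    using that unfolding R_def D_def by (auto intro!: abs_dist_diff_le_dk_Phi[OF assms(1,3,2,4)])
  have "GH_dist X Y \<le> D / 2"
    using R \<open>R \<noteq> {}\<close> R_dist X(1) Y(1) by (intro GH_dist_le_half compact_imp_bounded)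
  moreover have "0 \<le> D"
    using \<open>R \<noteq> {}\<close> R_dist by fastforce
  ultimately have "GH_dist X Y \<le> D" by linarith
  then show ?thesis unfolding D_def .
qed

end
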